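(* Let $\phi$ be a formula well-formed in $\Sigma$ and $a,b$ terms of a common name type well-typed in $\Sigma$. In the sequent calculus $NL^{\Rightarrow}$: if $\Sigma;\Gamma,(a\;b)\cdot\phi\Rightarrow\Delta$ is derivable, then $\Sigma;\Gamma,\phi\Rightarrow\Delta$ has a derivation of the same logical height; and if $\Sigma;\Gamma\Rightarrow(a\;b)\cdot\phi,\Delta$ is derivable, then $\Sigma;\Gamma\Rightarrow\phi,\Delta$ has a derivation of the same logical height.
   Context: Types $\tau ::= \delta \mid \nu \mid \langle\nu\rangle\tau$ ($\delta$ data types, $\nu$ name types). Terms $t ::= x \mid \mathsf{a} \mid c \mid f(\vec t)$ over variables $x$ and a disjoint countably infinite set of name-symbols $\mathsf a$; the signature contains, for all $\nu,\tau$, swapping $(a\;b)\cdot t$, abstraction $\langle a\rangle t$, equality $t\approx u$, freshness $a\#t$, besides constants $c$, function symbols $f$, relation symbols $p$. Formulas: $\top,\bot$, atoms, $\wedge,\vee,\supset,\forall x{:}\tau,\exists x{:}\tau$, and $\mathsf N\mathsf a{:}\nu.\phi$ (binding the name-symbol $\mathsf a$). Swapping on formulas: $(a\;b)\cdot\top=\top$, $(a\;b)\cdot\bot=\bot$, $(a\;b)\cdot p(\vec t)=p((a\;b)\cdot\vec t)$, commuting with $\wedge,\vee,\supset$, with $\forall x,\exists x$ (for $x$ not free in $a,b$) and with $\mathsf N\mathsf a$ (for $\mathsf a$ not occurring in $a,b$). Contexts $\Sigma::=\cdot\mid\Sigma,x{:}\tau\mid\Sigma\#\mathsf a{:}\nu$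 (no symbol twice; $\Sigma\#\mathsf a{:}\nu$ means $\mathsf a$ is fresh for everything in $\Sigma$); $Tm_\Sigma$ = terms well-typed in $\Sigma$; $|\cdot|=\emptyset$, $|\Sigma,x{:}\tau|=|\Sigma|$, $|\Sigma\#\mathsf a{:}\nu|=|\Sigma|\cup\{\mathsf a\#t\mid t\in Tm_\Sigma\}$. Rules of $NL^{\Rightarrow}$ for $\Sigma;\Gamma\Rightarrow\Delta$: (i) classical G3c rules: initial sequents $\Sigma;\Gamma,P\Rightarrow P,\Delta$ ($P$ atomic), $\top R$, $\bot L$, context-sharing left/right rules for $\wedge,\vee,\supset,\forall,\exists$; (ii) $\mathsf N R$: from $\Sigma\#\mathsf a{:}\nu;\Gamma\Rightarrow\phi,\Delta$ infer $\Sigma;\Gamma\Rightarrow\mathsf N\mathsf a{:}\nu.\phi,\Delta$; $\mathsf N L$: from $\Sigma\#\mathsf a{:}\nu;\Gamma,\phi\Rightarrow\Delta$ infer $\Sigma;\Gamma,\mathsf N\mathsf a{:}\nu.\phi\Rightarrow\Delta$ ($\mathsf a\notin\Sigma$); (iii) nonlogical rules: $\approx R$: from $\Sigma;\Gamma,t\approx t\Rightarrow\Delta$ infer $\Sigma;\Gamma\Rightarrow\Delta$; $\approx S$: from $\Sigma;\Gamma,t\approx u,P(t),P(u)\Rightarrow\Delta$ infer $\Sigma;\Gamma,t\approx u,P(t)\Rightarrow\Delta$; for each instance $\bigwedge_j P_j\supset\bigvee_{i\le m}Q_i$ of (S1) $(a\;a)\cdot x\approx x$, (S2) $(a\;b)\cdot(a\;b)\cdot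 x\approx x$, (S3) $(a\;b)\cdot a\approx b$, (E1) $(a\;b)\cdot c\approx c$, (E2) $(a\;b)\cdot f(\vec t)\approx f((a\;b)\cdot\vec t)$, (E3) $p(\vec t)\supset p((a\;b)\cdot\vec t)$, (F1) $a\#x\wedge b\#x\supset(a\;b)\cdot x\approx x$, (F2) $a\#b$ ($a,b$ of distinct name types), (F3) $a\#a\supset\bot$, (F4) $a\#b\vee a\approx b$, (A1) $a\#y\wedge x\approx(a\;b)\cdot y\supset\langle a\rangle x\approx\langle b\rangle y$ (arbitrary well-typed terms), the rule: from $\Sigma;\Gamma,\vec P,Q_i\Rightarrow\Delta$ for all $i$ infer $\Sigma;\Gamma,\vec P\Rightarrow\Delta$; (A2) from $\Sigma;\Gamma,E,a\approx b,t\approx u\Rightarrow\Delta$ and $\Sigma;\Gamma,E,a\#u,t\approx(a\;b)\cdot u\Rightarrow\Delta$ infer $\Sigma;\Gamma,E\Rightarrow\Delta$, $E$ being $\langle a\rangle t\approx\langle b\rangle u$; (A3) from $\Sigma\vdash t:\langle\nu\rangle\sigma$ and $\Sigma,a{:}\nu,x{:}\sigma;\Gamma,t\approx\langle a\rangle x\Rightarrow\Delta$ ($a,x\notin\Sigma$) infer $\Sigma;\Gamma\Rightarrow\Delta$; (F) from $\Sigma\#\mathsf a{:}\nu;\Gamma\Rightarrow\Delta$ ($\mathsf a\notin\Sigma$) infer $\Sigma;\Gamma\Rightarrow\Delta$; ($\Sigma\#$) from $\Sigma;\Gamma,\mathsf a\#t\Rightarrow\Delta$ with $\mathsf a\#t\in|\Sigma|$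 infer $\Sigma;\Gamma\Rightarrow\Delta$. The rules in (i) and (ii) are the logical rules; the logical height of a derivation is the maximum number of logical rules on any branch. *)

theory Defs
  imports Main "HOL-Library.Multiset"
begin

section \<open>Syntax of nominal logic (locally nameless representation)\<close>

datatype ty = DTy nat | NTy nat | ATy nat ty

text \<open>Free variables FV x, name-symbols NS a (a separate, disjoint supply),
  bound variables BV i and bound name-symbols BN i (de Bruijn indices, used only
  under the binders All/Ex resp. New), constants, function symbols,
  swapping (a b).t and abstraction <a>t.\<close>
datatype trm =
    BV nat | FV nat | BN nat | NS nat
  | Cst nat | Fn nat "trm list"
  | Swp trm trm trm
  | Abst trm trm

text \<open>Formulas. All/Ex bind a variable of the given type, New binds a name-symbol
  of the given name type (index).\<close>
datatype fm =
    Top | Bot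
  | Eq trm trm | Fr trm trm | Rel nat "trm list"
  | And fm fm | Or fm fm | Imp fm fm
  | All ty fm | Ex ty fm | New nat fm

record sig =
  cty :: "nat \<Rightarrow> ty"
  fty :: "nat \<Rightarrow> ty list \<times> ty"
  pty :: "nat \<Rightarrow> ty list"

text \<open>Context entries: x:tau, and #a:nu (name-symbol a of name type nu).\<close>
datatype centry = CVar nat ty | CName nat nat

type_synonym ctx = "centry list"

fun ent_vars :: "centry \<Rightarrow> nat list" where
  "ent_vars (CVar x _) = [x]"
| "ent_vars (CName _ _) = []"

fun ent_names :: "centry \<Rightarrow> nat list" where
  "ent_names (CVar _ _) = []"
| "ent_names (CName a _) = [a]"

definition cvars :: "ctx \<Rightarrow> nat set" where
  "cvars G = set (concat (map ent_vars G))"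

definition cnames :: "ctx \<Rightarrow> nat set" where
  "cnames G = set (concat (map ent_names G))"

definition ctx_ok :: "ctx \<Rightarrow> bool" where
  "ctx_ok G \<longleftrightarrow> distinct (concat (map ent_vars G)) \<and> distinct (concat (map ent_names G))"

fun fv_t :: "trm \<Rightarrow> nat set" where
  "fv_t (BV i) = {}" | "fv_t (FV x) = {x}" | "fv_t (BN i) = {}" | "fv_t (NS a) = {}"
| "fv_t (Cst c) = {}" | "fv_t (Fn f ts) = (\<Union>t\<in>set ts. fv_t t)"
| "fv_t (Swp a b t) = fv_t a \<union> fv_t b \<union> fv_t t"
| "fv_t (Abst a t) = fv_t a \<union> fv_t t"

fun fn_t :: "trm \<Rightarrow> nat set" where
  "fn_t (BV i) = {}" | "fn_t (FV x) = {}" | "fn_t (BN i) = {}" | "fn_t (NS a) = {a}"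
| "fn_t (Cst c) = {}" | "fn_t (Fn f ts) = (\<Union>t\<in>set ts. fn_t t)"
| "fn_t (Swp a b t) = fn_t a \<union> fn_t b \<union> fn_t t"
| "fn_t (Abst a t) = fn_t a \<union> fn_t t"

fun fv_f :: "fm \<Rightarrow> nat set" where
  "fv_f Top = {}" | "fv_f Bot = {}"
| "fv_f (Eq t u) = fv_t t \<union> fv_t u" | "fv_f (Fr t u) = fv_t t \<union> fv_t u"
| "fv_f (Rel p ts) = (\<Union>t\<in>set ts. fv_t t)"
| "fv_f (And A B) = fv_f A \<union> fv_f B" | "fv_f (Or A B) = fv_f A \<union> fv_f B"
| "fv_f (Imp A B) = fv_f A \<union> fv_f B"
| "fv_f (All T A) = fv_f A" | "fv_f (Ex T A) = fv_f A" | "fv_f (New v A) = fv_f A"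

fun fn_f :: "fm \<Rightarrow> nat set" where
  "fn_f Top = {}" | "fn_f Bot = {}"
| "fn_f (Eq t u) = fn_t t \<union> fn_t u" | "fn_f (Fr t u) = fn_t t \<union> fn_t u"
| "fn_f (Rel p ts) = (\<Union>t\<in>set ts. fn_t t)"
| "fn_f (And A B) = fn_f A \<union> fn_f B" | "fn_f (Or A B) = fn_f A \<union> fn_f B"
| "fn_f (Imp A B) = fn_f A \<union> fn_f B"
| "fn_f (All T A) = fn_f A" | "fn_f (Ex T A) = fn_f A" | "fn_f (New v A) = fn_f A"

definition fv_ms :: "fm multiset \<Rightarrow> nat set" where
  "fv_ms M = (\<Union>A\<in>set_mset M. fv_f A)"

definition fn_ms :: "fm multiset \<Rightarrow> nat set" where
  "fn_ms M = (\<Union>A\<in>set_mset M. fn_f A)"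

fun openv_t :: "nat \<Rightarrow> trm \<Rightarrow> trm \<Rightarrow> trm" where
  "openv_t k s (BV i) = (if i = k then s else BV i)"
| "openv_t k s (FV x) = FV x" | "openv_t k s (BN i) = BN i" | "openv_t k s (NS a) = NS a"
| "openv_t k s (Cst c) = Cst c"
| "openv_t k s (Fn f ts) = Fn f (map (openv_t k s) ts)"
| "openv_t k s (Swp a b t) = Swp (openv_t k s a) (openv_t k s b) (openv_t k s t)"
| "openv_t k s (Abst a t) = Abst (openv_t k s a) (openv_t k s t)"

fun openv :: "nat \<Rightarrow> trm \<Rightarrow> fm \<Rightarrow> fm" where
  "openv k s Top = Top" | "openv k s Bot = Bot"
| "openv k s (Eq t u) = Eq (openv_t k s t) (openv_t k s u)"
| "openv k s (Fr t u) = Fr (openv_t k s t) (openv_t k s u)"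
| "openv k s (Rel p ts) = Rel p (map (openv_t k s) ts)"
| "openv k s (And A B) = And (openv k s A) (openv k s B)"
| "openv k s (Or A B) = Or (openv k s A) (openv k s B)"
| "openv k s (Imp A B) = Imp (openv k s A) (openv k s B)"
| "openv k s (All T A) = All T (openv (Suc k) s A)"
| "openv k s (Ex T A) = Ex T (openv (Suc k) s A)"
| "openv k s (New v A) = New v (openv k s A)"

fun openn_t :: "nat \<Rightarrow> nat \<Rightarrow> trm \<Rightarrow> trm" where
  "openn_t k a (BV i) = BV i" | "openn_t k a (FV x) = FV x"
| "openn_t k a (BN i) = (if i = k then NS a else BN i)" | "openn_t k a (NS b) = NS b"
| "openn_t k a (Cst c) = Cst c"
| "openn_t k a (Fn f ts) = Fn f (map (openn_t k a) ts)"
| "openn_t k a (Swp b c t) = Swp (openn_t k a b) (openn_t k a c) (openn_t k a t)"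
| "openn_t k a (Abst b t) = Abst (openn_t k a b) (openn_t k a t)"

fun openn :: "nat \<Rightarrow> nat \<Rightarrow> fm \<Rightarrow> fm" where
  "openn k a Top = Top" | "openn k a Bot = Bot"
| "openn k a (Eq t u) = Eq (openn_t k a t) (openn_t k a u)"
| "openn k a (Fr t u) = Fr (openn_t k a t) (openn_t k a u)"
| "openn k a (Rel p ts) = Rel p (map (openn_t k a) ts)"
| "openn k a (And A B) = And (openn k a A) (openn k a B)"
| "openn k a (Or A B) = Or (openn k a A) (openn k a B)"
| "openn k a (Imp A B) = Imp (openn k a A) (openn k a B)"
| "openn k a (All T A) = All T (openn k a A)"
| "openn k a (Ex T A) = Ex T (openn k a A)"
| "openn k a (New v A) = New v (openn (Suc k) a A)"

fun subst_t :: "nat \<Rightarrow> trm \<Rightarrow> trm \<Rightarrow> trm" where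
  "subst_t x s (BV i) = BV i"
| "subst_t x s (FV y) = (if y = x then s else FV y)"
| "subst_t x s (BN i) = BN i" | "subst_t x s (NS a) = NS a"
| "subst_t x s (Cst c) = Cst c"
| "subst_t x s (Fn f ts) = Fn f (map (subst_t x s) ts)"
| "subst_t x s (Swp a b t) = Swp (subst_t x s a) (subst_t x s b) (subst_t x s t)"
| "subst_t x s (Abst a t) = Abst (subst_t x s a) (subst_t x s t)"

fun is_atom :: "fm \<Rightarrow> bool" where
  "is_atom (Eq t u) = True" | "is_atom (Fr t u) = True" | "is_atom (Rel p ts) = True"
| "is_atom _ = False"

fun subst_at :: "nat \<Rightarrow> trm \<Rightarrow> fm \<Rightarrow> fm" where
  "subst_at x s (Eq t u) = Eq (subst_t x s t) (subst_t x s u)"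
| "subst_at x s (Fr t u) = Fr (subst_t x s t) (subst_t x s u)"
| "subst_at x s (Rel p ts) = Rel p (map (subst_t x s) ts)"
| "subst_at x s A = A"

text \<open>Swapping on formulas: (a b).phi.  Since the terms a, b are locally closed,
  swapping commutes with all binders.\<close>
fun fswap :: "trm \<Rightarrow> trm \<Rightarrow> fm \<Rightarrow> fm" where
  "fswap a b Top = Top" | "fswap a b Bot = Bot"
| "fswap a b (Eq t u) = Eq (Swp a b t) (Swp a b u)"
| "fswap a b (Fr t u) = Fr (Swp a b t) (Swp a b u)"
| "fswap a b (Rel p ts) = Rel p (map (Swp a b) ts)"
| "fswap a b (And A B) = And (fswap a b A) (fswap a b B)"
| "fswap a b (Or A B) = Or (fswap a b A) (fswap a b B)"
| "fswap a b (Imp A B) = Imp (fswap a b A) (fswap a b B)"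
| "fswap a b (All T A) = All T (fswap a b A)"
| "fswap a b (Ex T A) = Ex T (fswap a b A)"
| "fswap a b (New v A) = New v (fswap a b A)"

inductive has_ty :: "sig \<Rightarrow> ctx \<Rightarrow> trm \<Rightarrow> ty \<Rightarrow> bool" for S :: sig where
  typ_FV: "CVar x T \<in> set G \<Longrightarrow> has_ty S G (FV x) T"
| typ_NS: "CName a v \<in> set G \<Longrightarrow> has_ty S G (NS a) (NTy v)"
| typ_Cst: "has_ty S G (Cst c) (cty S c)"
| typ_Fn: "fty S f = (Ts, T) \<Longrightarrow> list_all2 (has_ty S G) ts Ts \<Longrightarrow> has_ty S G (Fn f ts) T"
| typ_Swp: "has_ty S G a (NTy v) \<Longrightarrow> has_ty S G b (NTy v) \<Longrightarrow> has_ty S G t T \<Longrightarrow> has_ty S G (Swp a b t) T"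
| typ_Abst: "has_ty S G a (NTy v) \<Longrightarrow> has_ty S G t T \<Longrightarrow> has_ty S G (Abst a t) (ATy v T)"

inductive wf_fm :: "sig \<Rightarrow> ctx \<Rightarrow> fm \<Rightarrow> bool" for S :: sig where
  wf_Top: "wf_fm S G Top"
| wf_Bot: "wf_fm S G Bot"
| wf_Eq: "has_ty S G t T \<Longrightarrow> has_ty S G u T \<Longrightarrow> wf_fm S G (Eq t u)"
| wf_Fr: "has_ty S G a (NTy v) \<Longrightarrow> has_ty S G t T \<Longrightarrow> wf_fm S G (Fr a t)"
| wf_Rel: "list_all2 (has_ty S G) ts (pty S p) \<Longrightarrow> wf_fm S G (Rel p ts)"
| wf_And: "wf_fm S G A \<Longrightarrow> wf_fm S G B \<Longrightarrow> wf_fm S G (And A B)"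
| wf_Or: "wf_fm S G A \<Longrightarrow> wf_fm S G B \<Longrightarrow> wf_fm S G (Or A B)"
| wf_Imp: "wf_fm S G A \<Longrightarrow> wf_fm S G B \<Longrightarrow> wf_fm S G (Imp A B)"
| wf_All: "(\<And>x. x \<notin> cvars G \<Longrightarrow> wf_fm S (G @ [CVar x T]) (openv 0 (FV x) A)) \<Longrightarrow> wf_fm S G (All T A)"
| wf_Ex: "(\<And>x. x \<notin> cvars G \<Longrightarrow> wf_fm S (G @ [CVar x T]) (openv 0 (FV x) A)) \<Longrightarrow> wf_fm S G (Ex T A)"
| wf_New: "(\<And>a. a \<notin> cnames G \<Longrightarrow> wf_fm S (G @ [CName a v]) (openn 0 a A)) \<Longrightarrow> wf_fm S G (New v A)"

text \<open>The freshness information |Sigma| of a context: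
  |Sigma # a:nu| contains a # t for every t in Tm_Sigma.\<close>
definition ctx_fresh :: "sig \<Rightarrow> ctx \<Rightarrow> fm set" where
  "ctx_fresh S G = {Fr (NS a) t | a t. \<exists>G1 G2 v T. G = G1 @ [CName a v] @ G2 \<and> has_ty S G1 t T}"

text \<open>der S G Gam Del n: the sequent G; Gam => Del has a derivation of logical
  height at most n.  Logical rules (G3c rules and the N rules) increase the height
  by one; zero-premise rules have height 0; nonlogical rules do not count.\<close>

inductive der :: "sig \<Rightarrow> ctx \<Rightarrow> fm multiset \<Rightarrow> fm multiset \<Rightarrow> nat \<Rightarrow> bool" for S :: sig where
  Init: "is_atom P \<Longrightarrow> der S G (Gam + {#P#}) (Del + {#P#}) n"
| TopR: "der S G Gam (Del + {#Top#}) n"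
| BotL: "der S G (Gam + {#Bot#}) Del n"
| AndL: "der S G (Gam + {#A, B#}) Del n \<Longrightarrow> der S G (Gam + {#And A B#}) Del (Suc n)"
| AndR: "der S G Gam (Del + {#A#}) n \<Longrightarrow> der S G Gam (Del + {#B#}) n
         \<Longrightarrow> der S G Gam (Del + {#And A B#}) (Suc n)"
| OrL: "der S G (Gam + {#A#}) Del n \<Longrightarrow> der S G (Gam + {#B#}) Del n
         \<Longrightarrow> der S G (Gam + {#Or A B#}) Del (Suc n)"
| OrR: "der S G Gam (Del + {#A, B#}) n \<Longrightarrow> der S G Gam (Del + {#Or A B#}) (Suc n)"
| ImpL: "der S G Gam (Del + {#A#}) n \<Longrightarrow> der S G (Gam + {#B#}) Del n
         \<Longrightarrow> der S G (Gam + {#Imp A B#}) Del (Suc n)"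
| ImpR: "der S G (Gam + {#A#}) (Del + {#B#}) n \<Longrightarrow> der S G Gam (Del + {#Imp A B#}) (Suc n)"
| AllL: "has_ty S G t T \<Longrightarrow> der S G (Gam + {#All T A, openv 0 t A#}) Del n
         \<Longrightarrow> der S G (Gam + {#All T A#}) Del (Suc n)"
| AllR: "y \<notin> cvars G \<Longrightarrow> y \<notin> fv_ms Gam \<Longrightarrow> y \<notin> fv_ms Del \<Longrightarrow> y \<notin> fv_f A
         \<Longrightarrow> der S (G @ [CVar y T]) Gam (Del + {#openv 0 (FV y) A#}) n
         \<Longrightarrow> der S G Gam (Del + {#All T A#}) (Suc n)"
| ExL: "y \<notin> cvars G \<Longrightarrow> y \<notin> fv_ms Gam \<Longrightarrow> y \<notin> fv_ms Del \<Longrightarrow> y \<notin> fv_f A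
         \<Longrightarrow> der S (G @ [CVar y T]) (Gam + {#openv 0 (FV y) A#}) Del n
         \<Longrightarrow> der S G (Gam + {#Ex T A#}) Del (Suc n)"
| ExR: "has_ty S G t T \<Longrightarrow> der S G Gam (Del + {#Ex T A, openv 0 t A#}) n
         \<Longrightarrow> der S G Gam (Del + {#Ex T A#}) (Suc n)"
| NR: "a \<notin> cnames G \<Longrightarrow> a \<notin> fn_ms Gam \<Longrightarrow> a \<notin> fn_ms Del \<Longrightarrow> a \<notin> fn_f A
         \<Longrightarrow> der S (G @ [CName a v]) Gam (Del + {#openn 0 a A#}) n
         \<Longrightarrow> der S G Gam (Del + {#New v A#}) (Suc n)"
| NL: "a \<notin> cnames G \<Longrightarrow> a \<notin> fn_ms Gam \<Longrightarrow> a \<notin> fn_ms Del \<Longrightarrow> a \<notin> fn_f A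
         \<Longrightarrow> der S (G @ [CName a v]) (Gam + {#openn 0 a A#}) Del n
         \<Longrightarrow> der S G (Gam + {#New v A#}) Del (Suc n)"
| EqR: "has_ty S G t T \<Longrightarrow> der S G (Gam + {#Eq t t#}) Del n \<Longrightarrow> der S G Gam Del n"
| EqS: "is_atom P \<Longrightarrow> der S G (Gam + {#Eq t u, subst_at x t P, subst_at x u P#}) Del n
         \<Longrightarrow> der S G (Gam + {#Eq t u, subst_at x t P#}) Del n"
| S1: "has_ty S G a (NTy v) \<Longrightarrow> has_ty S G x T
         \<Longrightarrow> der S G (Gam + {#Eq (Swp a a x) x#}) Del n \<Longrightarrow> der S G Gam Del n"
| S2: "has_ty S G a (NTy v) \<Longrightarrow> has_ty S G b (NTy v) \<Longrightarrow> has_ty S G x T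
         \<Longrightarrow> der S G (Gam + {#Eq (Swp a b (Swp a b x)) x#}) Del n \<Longrightarrow> der S G Gam Del n"
| S3: "has_ty S G a (NTy v) \<Longrightarrow> has_ty S G b (NTy v)
         \<Longrightarrow> der S G (Gam + {#Eq (Swp a b a) b#}) Del n \<Longrightarrow> der S G Gam Del n"
| E1: "has_ty S G a (NTy v) \<Longrightarrow> has_ty S G b (NTy v)
         \<Longrightarrow> der S G (Gam + {#Eq (Swp a b (Cst c)) (Cst c)#}) Del n \<Longrightarrow> der S G Gam Del n"
| E2: "has_ty S G a (NTy v) \<Longrightarrow> has_ty S G b (NTy v) \<Longrightarrow> has_ty S G (Fn f ts) T
         \<Longrightarrow> der S G (Gam + {#Eq (Swp a b (Fn f ts)) (Fn f (map (Swp a b) ts))#}) Del n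
         \<Longrightarrow> der S G Gam Del n"
| E2_swap: "has_ty S G a (NTy v) \<Longrightarrow> has_ty S G b (NTy v) \<Longrightarrow> has_ty S G (Swp c d t) T
         \<Longrightarrow> der S G (Gam + {#Eq (Swp a b (Swp c d t)) (Swp (Swp a b c) (Swp a b d) (Swp a b t))#}) Del n
         \<Longrightarrow> der S G Gam Del n"
| E2_abs: "has_ty S G a (NTy v) \<Longrightarrow> has_ty S G b (NTy v) \<Longrightarrow> has_ty S G (Abst c t) T
         \<Longrightarrow> der S G (Gam + {#Eq (Swp a b (Abst c t)) (Abst (Swp a b c) (Swp a b t))#}) Del n
         \<Longrightarrow> der S G Gam Del n"
| E3: "is_atom P \<Longrightarrow> wf_fm S G P \<Longrightarrow> has_ty S G a (NTy v) \<Longrightarrow> has_ty S G b (NTy v)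
         \<Longrightarrow> der S G (Gam + {#P, fswap a b P#}) Del n \<Longrightarrow> der S G (Gam + {#P#}) Del n"
| F1: "has_ty S G a (NTy v) \<Longrightarrow> has_ty S G b (NTy v) \<Longrightarrow> has_ty S G x T
         \<Longrightarrow> der S G (Gam + {#Fr a x, Fr b x, Eq (Swp a b x) x#}) Del n
         \<Longrightarrow> der S G (Gam + {#Fr a x, Fr b x#}) Del n"
| F2: "has_ty S G a (NTy v) \<Longrightarrow> has_ty S G b (NTy w) \<Longrightarrow> v \<noteq> w
         \<Longrightarrow> der S G (Gam + {#Fr a b#}) Del n \<Longrightarrow> der S G Gam Del n"
| F3: "has_ty S G a (NTy v) \<Longrightarrow> der S G (Gam + {#Fr a a#}) Del n"
| F4: "has_ty S G a (NTy v) \<Longrightarrow> has_ty S G b (NTy v)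
         \<Longrightarrow> der S G (Gam + {#Fr a b#}) Del n \<Longrightarrow> der S G (Gam + {#Eq a b#}) Del n
         \<Longrightarrow> der S G Gam Del n"
| A1: "has_ty S G a (NTy v) \<Longrightarrow> has_ty S G b (NTy v) \<Longrightarrow> has_ty S G x T \<Longrightarrow> has_ty S G y T
         \<Longrightarrow> der S G (Gam + {#Fr a y, Eq x (Swp a b y), Eq (Abst a x) (Abst b y)#}) Del n
         \<Longrightarrow> der S G (Gam + {#Fr a y, Eq x (Swp a b y)#}) Del n"
| A2: "der S G (Gam + {#Eq (Abst a t) (Abst b u), Eq a b, Eq t u#}) Del n
         \<Longrightarrow> der S G (Gam + {#Eq (Abst a t) (Abst b u), Fr a u, Eq t (Swp a b u)#}) Del n
         \<Longrightarrow> der S G (Gam + {#Eq (Abst a t) (Abst b u)#}) Del n"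
| A3: "has_ty S G t (ATy v T) \<Longrightarrow> a \<notin> cvars G \<Longrightarrow> x \<notin> cvars G \<Longrightarrow> a \<noteq> x
         \<Longrightarrow> a \<notin> fv_ms Gam \<union> fv_ms Del \<Longrightarrow> x \<notin> fv_ms Gam \<union> fv_ms Del
         \<Longrightarrow> der S (G @ [CVar a (NTy v), CVar x T]) (Gam + {#Eq t (Abst (FV a) (FV x))#}) Del n
         \<Longrightarrow> der S G Gam Del n"
| F: "a \<notin> cnames G \<Longrightarrow> a \<notin> fn_ms Gam \<Longrightarrow> a \<notin> fn_ms Del
         \<Longrightarrow> der S (G @ [CName a v]) Gam Del n \<Longrightarrow> der S G Gam Del n"
| CtxFresh: "Fr (NS a) t \<in> ctx_fresh S G \<Longrightarrow> der S G (Gam + {#Fr (NS a) t#}) Del n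
         \<Longrightarrow> der S G Gam Del n"

end

theory Submission
  imports Defs "HOL-Combinatorics.Transposition"
begin

text \<open>Transform a derivation of \<open>\<Sigma>;\<Gamma>,(a b)\<cdot>\<phi> \<Rightarrow> \<Delta>\<close> (or of \<open>\<Sigma>;\<Gamma> \<Rightarrow> (a b)\<cdot>\<phi>,\<Delta>\<close>) rule
  by rule, replacing every descendant of \<open>(a b)\<cdot>\<phi>\<close> by the corresponding descendant of \<open>\<phi>\<close>.
  Swapping by the closed terms \<open>a\<close>, \<open>b\<close> commutes with all connectives and with opening of
  binders, so every logical rule is reproduced unchanged, and the eigenvariable conditions
  survive because \<open>\<phi>\<close> has no more free symbols than \<open>(a b)\<cdot>\<phi>\<close>. Only atoms need care.
  When a nonlogical rule uses a swapped atom \<open>(a b)\<cdot>P\<close> on the left, rule (E3) recovers it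
  from \<open>P\<close>; the copy of \<open>P\<close> left behind is carried along as harmless weakening. An initial
  sequent with \<open>(a b)\<cdot>P\<close> on the right becomes \<open>\<Gamma>,(a b)\<cdot>P \<Rightarrow> P,\<Delta>\<close>, which follows from
  (E3), the double swap axiom (S2) and replacement (\<open>\<approx>\<close>S). Only nonlogical rules are added,
  so the logical height is preserved.\<close>

lemma finite_fv_t [simp]: "finite (fv_t t)" and finite_fn_t [simp]: "finite (fn_t t)"
  by (induction t) auto

lemma finite_fv_f [simp]: "finite (fv_f A)" and finite_fn_f [simp]: "finite (fn_f A)"
  by (induction A) auto

lemma finite_cvars [simp]: "finite (cvars G)" and finite_cnames [simp]: "finite (cnames G)"
  by (auto simp: cvars_def cnames_def)

lemma ex_fresh_nat: "finite (X :: nat set) \<Longrightarrow> \<exists>x. x \<notin> X"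
  using ex_new_if_finite[OF infinite_UNIV_nat] .

lemma cvars_iff: "x \<in> cvars G \<longleftrightarrow> (\<exists>T. CVar x T \<in> set G)"
proof -
  have "x \<in> set (ent_vars e) \<longleftrightarrow> (\<exists>T. e = CVar x T)" for e
    by (cases e) auto
  then show ?thesis
    by (auto simp: cvars_def)
qed

lemma cnames_iff: "a \<in> cnames G \<longleftrightarrow> (\<exists>v. CName a v \<in> set G)"
proof -
  have "a \<in> set (ent_names e) \<longleftrightarrow> (\<exists>v. e = CName a v)" for e
    by (cases e) auto
  then show ?thesis
    by (auto simp: cnames_def)
qed

lemma cvars_append [simp]: "cvars (G @ H) = cvars G \<union> cvars H"
  and cnames_append [simp]: "cnames (G @ H) = cnames G \<union> cnames H"
  by (auto simp: cvars_def cnames_def)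

lemma cvars_singleton [simp]: "cvars [CVar x T] = {x}" "cvars [CName a v] = {}"
  and cnames_singleton [simp]: "cnames [CVar x T] = {}" "cnames [CName a v] = {a}"
  by (auto simp: cvars_def cnames_def)

lemma cvars_mono: "set G \<subseteq> set G' \<Longrightarrow> cvars G \<subseteq> cvars G'"
  and cnames_mono: "set G \<subseteq> set G' \<Longrightarrow> cnames G \<subseteq> cnames G'"
  by (auto simp: cvars_iff cnames_iff) blast+

lemma fv_ms_simps [simp]:
  "fv_ms {#} = {}" "fn_ms {#} = {}"
  "fv_ms (M + N) = fv_ms M \<union> fv_ms N" "fv_ms (add_mset A M) = fv_f A \<union> fv_ms M"
  "fn_ms (M + N) = fn_ms M \<union> fn_ms N" "fn_ms (add_mset A M) = fn_f A \<union> fn_ms M"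
  by (auto simp: fv_ms_def fn_ms_def)

lemma list_all2_ex_related: "list_all2 P xs ys \<Longrightarrow> x \<in> set xs \<Longrightarrow> \<exists>y. P x y"
  by (induction rule: list_all2_induct) auto

lemma has_ty_mono: "has_ty S G t T \<Longrightarrow> set G \<subseteq> set G' \<Longrightarrow> has_ty S G' t T"
proof (induction rule: has_ty.induct)
  case (typ_Fn f Ts T G ts)
  then show ?case
    by (auto intro!: has_ty.typ_Fn elim!: list.rel_mono_strong)
qed (auto intro: has_ty.intros)

lemma has_ty_append: "has_ty S G t T \<Longrightarrow> has_ty S (G @ H) t T"
  by (erule has_ty_mono) auto

lemma has_ty_closed_scoped:
  assumes "has_ty S G t T"
  shows "openv_t k s t = t" "openn_t k c t = t" "fv_t t \<subseteq> cvars G" "fn_t t \<subseteq> cnames G"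
proof -
  have "(\<forall>k s. openv_t k s t = t) \<and> (\<forall>k c. openn_t k c t = t)
    \<and> fv_t t \<subseteq> cvars G \<and> fn_t t \<subseteq> cnames G"
    using assms
  proof (induction rule: has_ty.induct)
    case (typ_Fn f Ts T G ts)
    then have "\<forall>t\<in>set ts. (\<forall>k s. openv_t k s t = t) \<and> (\<forall>k c. openn_t k c t = t)
        \<and> fv_t t \<subseteq> cvars G \<and> fn_t t \<subseteq> cnames G"
      by (blast dest: list_all2_ex_related)
    then show ?case
      by (auto intro: map_idI)
  qed (auto simp: cvars_iff cnames_iff)
  then show "openv_t k s t = t" "openn_t k c t = t" "fv_t t \<subseteq> cvars G" "fn_t t \<subseteq> cnames G"
    by auto
qed

lemma wf_mono: "wf_fm S G A \<Longrightarrow> set G \<subseteq> set G' \<Longrightarrow> wf_fm S G' A"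
proof (induction arbitrary: G' rule: wf_fm.induct)
  case (wf_Rel G ts p)
  then show ?case
    by (auto intro!: wf_fm.wf_Rel intro: has_ty_mono elim!: list.rel_mono_strong)
next
  case (wf_All G T A)
  then show ?case
    using cvars_mono[of G G'] by (intro wf_fm.wf_All wf_All.IH) auto
next
  case (wf_Ex G T A)
  then show ?case
    using cvars_mono[of G G'] by (intro wf_fm.wf_Ex wf_Ex.IH) auto
next
  case (wf_New G v A)
  then show ?case
    using cnames_mono[of G G'] by (intro wf_fm.wf_New wf_New.IH) auto
qed (auto intro!: wf_fm.intros intro: has_ty_mono)

lemma fv_t_openv_t: "fv_t t \<subseteq> fv_t (openv_t k s t)"
  by (induction t) auto

lemma fn_t_openv_t: "fn_t t \<subseteq> fn_t (openv_t k s t)"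
  by (induction t) auto

lemma fv_t_openn_t: "fv_t (openn_t k c t) = fv_t t"
  by (induction t) auto

lemma fn_t_openn_t: "fn_t t \<subseteq> fn_t (openn_t k c t)"
  by (induction t) auto

lemma fv_f_openv: "fv_f A \<subseteq> fv_f (openv k s A)"
  by (induction A arbitrary: k) (auto dest: fv_t_openv_t[THEN subsetD])

lemma fn_f_openv: "fn_f A \<subseteq> fn_f (openv k s A)"
  by (induction A arbitrary: k) (auto dest: fn_t_openv_t[THEN subsetD])

lemma fv_f_openn: "fv_f (openn k c A) = fv_f A"
  by (induction A arbitrary: k) (auto simp: fv_t_openn_t)

lemma fn_f_openn: "fn_f A \<subseteq> fn_f (openn k c A)"
  by (induction A arbitrary: k) (auto dest: fn_t_openn_t[THEN subsetD])

lemma wf_fm_scoped: "wf_fm S G A \<Longrightarrow> fv_f A \<subseteq> cvars G \<and> fn_f A \<subseteq> cnames G"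
proof (induction rule: wf_fm.induct)
  case (wf_All G T A)
  obtain x where "x \<notin> cvars G \<union> fv_f A"
    using ex_fresh_nat[of "cvars G \<union> fv_f A"] by auto
  with wf_All.IH[of x] fv_f_openv[of A 0 "FV x"] fn_f_openv[of A 0 "FV x"] show ?case
    by auto
next
  case (wf_Ex G T A)
  obtain x where "x \<notin> cvars G \<union> fv_f A"
    using ex_fresh_nat[of "cvars G \<union> fv_f A"] by auto
  with wf_Ex.IH[of x] fv_f_openv[of A 0 "FV x"] fn_f_openv[of A 0 "FV x"] show ?case
    by auto
next
  case (wf_New G v A)
  obtain a where "a \<notin> cnames G \<union> fn_f A"
    using ex_fresh_nat[of "cnames G \<union> fn_f A"] by auto
  with wf_New.IH[of a] fv_f_openn[of 0 a A] fn_f_openn[of A 0 a] show ?case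
    by auto
next
  case (wf_Rel G ts p)
  then show ?case
    by (fastforce dest: list_all2_ex_related has_ty_closed_scoped(3,4))
qed (fastforce dest: has_ty_closed_scoped(3,4))+

lemma is_atom_fswap [simp]: "is_atom (fswap a b P) = is_atom P"
  by (cases P) auto

lemma fv_f_fswap: "fv_f A \<subseteq> fv_f (fswap a b A)"
  and fn_f_fswap: "fn_f A \<subseteq> fn_f (fswap a b A)"
  by (induction A) auto

lemma fswap_openv:
  "has_ty S G a T \<Longrightarrow> has_ty S G b U \<Longrightarrow> openv k s (fswap a b A) = fswap a b (openv k s A)"
  by (induction A arbitrary: k) (auto simp: has_ty_closed_scoped)

lemma fswap_openn:
  "has_ty S G a T \<Longrightarrow> has_ty S G b U \<Longrightarrow> openn k c (fswap a b A) = fswap a b (openn k c A)"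
  by (induction A arbitrary: k) (auto simp: has_ty_closed_scoped)

lemma wf_fswap:
  "wf_fm S G A \<Longrightarrow> has_ty S G a (NTy v) \<Longrightarrow> has_ty S G b (NTy v) \<Longrightarrow> wf_fm S G (fswap a b A)"
proof (induction rule: wf_fm.induct)
  case (wf_Rel G ts p)
  then show ?case
    by (auto intro!: wf_fm.wf_Rel has_ty.typ_Swp simp: list.rel_map elim!: list.rel_mono_strong)
qed (auto intro!: wf_fm.intros has_ty.typ_Swp simp: fswap_openv fswap_openn has_ty_append)

section \<open>Renaming and substitution of variables\<close>

fun rename_t :: "(nat \<Rightarrow> nat) \<Rightarrow> trm \<Rightarrow> trm" where
  "rename_t f (BV i) = BV i"
| "rename_t f (FV x) = FV (f x)"
| "rename_t f (BN i) = BN i"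
| "rename_t f (NS a) = NS a"
| "rename_t f (Cst c) = Cst c"
| "rename_t f (Fn g ts) = Fn g (map (rename_t f) ts)"
| "rename_t f (Swp a b t) = Swp (rename_t f a) (rename_t f b) (rename_t f t)"
| "rename_t f (Abst a t) = Abst (rename_t f a) (rename_t f t)"

fun rename_f :: "(nat \<Rightarrow> nat) \<Rightarrow> fm \<Rightarrow> fm" where
  "rename_f f Top = Top"
| "rename_f f Bot = Bot"
| "rename_f f (Eq t u) = Eq (rename_t f t) (rename_t f u)"
| "rename_f f (Fr t u) = Fr (rename_t f t) (rename_t f u)"
| "rename_f f (Rel p ts) = Rel p (map (rename_t f) ts)"
| "rename_f f (And A B) = And (rename_f f A) (rename_f f B)"
| "rename_f f (Or A B) = Or (rename_f f A) (rename_f f B)"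
| "rename_f f (Imp A B) = Imp (rename_f f A) (rename_f f B)"
| "rename_f f (All T A) = All T (rename_f f A)"
| "rename_f f (Ex T A) = Ex T (rename_f f A)"
| "rename_f f (New v A) = New v (rename_f f A)"

fun rename_entry :: "(nat \<Rightarrow> nat) \<Rightarrow> centry \<Rightarrow> centry" where
  "rename_entry f (CVar x T) = CVar (f x) T"
| "rename_entry f (CName a v) = CName a v"

lemma rename_f_openv: "rename_f f (openv k s A) = openv k (rename_t f s) (rename_f f A)"
proof -
  have "rename_t f (openv_t k s t) = openv_t k (rename_t f s) (rename_t f t)" for k t
    by (induction t) auto
  then show ?thesis
    by (induction A arbitrary: k) auto
qed

lemma rename_f_openn: "rename_f f (openn k c A) = openn k c (rename_f f A)"
proof -
  have "rename_t f (openn_t k c t) = openn_t k c (rename_t f t)" for k t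
    by (induction t) auto
  then show ?thesis
    by (induction A arbitrary: k) auto
qed

lemma rename_t_id: "(\<And>x. x \<in> fv_t t \<Longrightarrow> f x = x) \<Longrightarrow> rename_t f t = t"
  by (induction t) (auto intro: map_idI)

lemma rename_f_id: "(\<And>x. x \<in> fv_f A \<Longrightarrow> f x = x) \<Longrightarrow> rename_f f A = A"
  by (induction A) (auto intro: map_idI rename_t_id)

lemma rename_entries_id: "(\<And>x. x \<in> cvars G \<Longrightarrow> f x = x) \<Longrightarrow> map (rename_entry f) G = G"
proof (induction G)
  case (Cons e G)
  then show ?case
    by (cases e) (auto simp: cvars_def)
qed simp

lemma cvars_rename: "cvars (map (rename_entry f) G) = f ` cvars G"
proof -
  have "set (ent_vars (rename_entry f e)) = f ` set (ent_vars e)" for e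
    by (cases e) auto
  then show ?thesis
    by (auto simp: cvars_def)
qed

lemma cnames_rename: "cnames (map (rename_entry f) G) = cnames G"
proof -
  have "ent_names (rename_entry f e) = ent_names e" for e
    by (cases e) auto
  then show ?thesis
    by (simp add: cnames_def)
qed

lemma has_ty_rename: "has_ty S G t T \<Longrightarrow> has_ty S (map (rename_entry f) G) (rename_t f t) T"
proof (induction rule: has_ty.induct)
  case (typ_FV x T G)
  then show ?case
    by (force intro: has_ty.typ_FV)
next
  case (typ_NS a v G)
  then show ?case
    by (force intro: has_ty.typ_NS)
next
  case (typ_Fn g Ts T G ts)
  then show ?case
    by (auto intro!: has_ty.typ_Fn simp: list.rel_map elim!: list.rel_mono_strong)
qed (auto intro: has_ty.intros)

lemma wf_rename: "wf_fm S G A \<Longrightarrow> bij f \<Longrightarrow> wf_fm S (map (rename_entry f) G) (rename_f f A)"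
proof (induction rule: wf_fm.induct)
  case (wf_All G T A)
  have "wf_fm S (map (rename_entry f) G @ [CVar y T]) (openv 0 (FV y) (rename_f f A))"
    if y: "y \<notin> cvars (map (rename_entry f) G)" for y
  proof -
    have fy: "f (inv f y) = y"
      using \<open>bij f\<close> by (simp add: bij_is_surj surj_f_inv_f)
    with y have "inv f y \<notin> cvars G"
      by (force simp: cvars_rename)
    from wf_All.IH[OF this \<open>bij f\<close>] fy show ?thesis
      by (simp add: rename_f_openv)
  qed
  then show ?case
    by (auto intro: wf_fm.wf_All)
next
  case (wf_Ex G T A)
  have "wf_fm S (map (rename_entry f) G @ [CVar y T]) (openv 0 (FV y) (rename_f f A))"
    if y: "y \<notin> cvars (map (rename_entry f) G)" for y
  proof -
    have fy: "f (inv f y) = y"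
      using \<open>bij f\<close> by (simp add: bij_is_surj surj_f_inv_f)
    with y have "inv f y \<notin> cvars G"
      by (force simp: cvars_rename)
    from wf_Ex.IH[OF this \<open>bij f\<close>] fy show ?thesis
      by (simp add: rename_f_openv)
  qed
  then show ?case
    by (auto intro: wf_fm.wf_Ex)
next
  case (wf_New G v A)
  then show ?case
    by (auto intro!: wf_fm.wf_New simp: cnames_rename rename_f_openn)
next
  case (wf_Rel G ts p)
  then show ?case
    by (auto intro!: wf_fm.wf_Rel simp: list.rel_map elim!: list.rel_mono_strong
        dest: has_ty_rename)
qed (auto intro!: wf_fm.intros dest: has_ty_rename)

lemma wf_openv_rename:
  assumes wf: "wf_fm S (G @ [CVar z T]) (openv 0 (FV z) A)"
    and z: "z \<notin> cvars G" "z \<notin> fv_f A" and y: "y \<notin> cvars G"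
  shows "wf_fm S (G @ [CVar y T]) (openv 0 (FV y) A)"
proof -
  let ?f = "Transposition.transpose z y"
  have "fv_f A \<subseteq> cvars G \<union> {z}"
    using wf_fm_scoped[OF wf] fv_f_openv[of A 0 "FV z"] by auto
  with z y have "rename_f ?f A = A"
    by (intro rename_f_id) (auto simp: transpose_def)
  moreover have "map (rename_entry ?f) G = G"
    using z(1) y by (intro rename_entries_id) (auto simp: transpose_def)
  ultimately show ?thesis
    using wf_rename[OF wf bij_transpose[of z y]] by (simp add: rename_f_openv)
qed

lemma wf_All_fresh:
  "wf_fm S (G @ [CVar z T]) (openv 0 (FV z) A) \<Longrightarrow> z \<notin> cvars G \<Longrightarrow> z \<notin> fv_f A
    \<Longrightarrow> wf_fm S G (All T A)"
  by (blast intro: wf_fm.wf_All wf_openv_rename)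

lemma wf_Ex_fresh:
  "wf_fm S (G @ [CVar z T]) (openv 0 (FV z) A) \<Longrightarrow> z \<notin> cvars G \<Longrightarrow> z \<notin> fv_f A
    \<Longrightarrow> wf_fm S G (Ex T A)"
  by (blast intro: wf_fm.wf_Ex wf_openv_rename)

fun subst_f :: "nat \<Rightarrow> trm \<Rightarrow> fm \<Rightarrow> fm" where
  "subst_f x s Top = Top"
| "subst_f x s Bot = Bot"
| "subst_f x s (Eq t u) = Eq (subst_t x s t) (subst_t x s u)"
| "subst_f x s (Fr t u) = Fr (subst_t x s t) (subst_t x s u)"
| "subst_f x s (Rel p ts) = Rel p (map (subst_t x s) ts)"
| "subst_f x s (And A B) = And (subst_f x s A) (subst_f x s B)"
| "subst_f x s (Or A B) = Or (subst_f x s A) (subst_f x s B)"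
| "subst_f x s (Imp A B) = Imp (subst_f x s A) (subst_f x s B)"
| "subst_f x s (All T A) = All T (subst_f x s A)"
| "subst_f x s (Ex T A) = Ex T (subst_f x s A)"
| "subst_f x s (New v A) = New v (subst_f x s A)"

lemma subst_f_openv_fresh: "x \<notin> fv_f A \<Longrightarrow> subst_f x s (openv k (FV x) A) = openv k s A"
proof -
  have "x \<notin> fv_t t \<Longrightarrow> subst_t x s (openv_t k (FV x) t) = openv_t k s t" for k t
    by (induction t) auto
  then show "x \<notin> fv_f A \<Longrightarrow> subst_f x s (openv k (FV x) A) = openv k s A"
    by (induction A arbitrary: k) auto
qed

lemma subst_f_openv_commute:
  assumes "has_ty S G s T" "y \<noteq> x"
  shows "subst_f x s (openv k (FV y) A) = openv k (FV y) (subst_f x s A)"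
proof -
  have "subst_t x s (openv_t k (FV y) t) = openv_t k (FV y) (subst_t x s t)" for k t
    using assms by (induction t) (auto simp: has_ty_closed_scoped)
  then show ?thesis
    by (induction A arbitrary: k) auto
qed

lemma subst_f_openn_commute:
  assumes "has_ty S G s T"
  shows "subst_f x s (openn k c A) = openn k c (subst_f x s A)"
proof -
  have "subst_t x s (openn_t k c t) = openn_t k c (subst_t x s t)" for k t
    using assms by (induction t) (auto simp: has_ty_closed_scoped)
  then show ?thesis
    by (induction A arbitrary: k) auto
qed

lemma fv_f_subst_f: "fv_f (subst_f x s A) \<subseteq> (fv_f A - {x}) \<union> fv_t s"
proof -
  have fv_t_subst: "fv_t (subst_t x s t) \<subseteq> (fv_t t - {x}) \<union> fv_t s" for t
    by (induction t) auto
  show ?thesis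
    by (induction A) (auto dest: fv_t_subst[THEN subsetD])
qed

lemma has_ty_subst:
  "has_ty S G' u U \<Longrightarrow> set G' \<subseteq> insert (CVar x T) (set G) \<Longrightarrow> x \<notin> cvars G
    \<Longrightarrow> has_ty S G t T \<Longrightarrow> has_ty S G (subst_t x t u) U"
proof (induction rule: has_ty.induct)
  case (typ_FV y U G')
  then show ?case
    by (auto intro: has_ty.intros simp: cvars_iff)
next
  case (typ_Fn f Ts T G ts)
  then show ?case
    by (auto intro!: has_ty.intros simp: list.rel_map elim!: list.rel_mono_strong)
qed (auto intro: has_ty.intros)

lemma wf_subst:
  "wf_fm S G' B \<Longrightarrow> set G' \<subseteq> insert (CVar x T) (set G) \<Longrightarrow> x \<notin> cvars G
    \<Longrightarrow> has_ty S G t T \<Longrightarrow> wf_fm S G (subst_f x t B)"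
proof (induction arbitrary: G rule: wf_fm.induct)
  case (wf_All G' U C)
  obtain z where z: "z \<notin> cvars G \<union> cvars G' \<union> {x} \<union> fv_f C \<union> fv_t t"
    using ex_fresh_nat[of "cvars G \<union> cvars G' \<union> {x} \<union> fv_f C \<union> fv_t t"] by auto
  with wf_All.prems have "wf_fm S (G @ [CVar z U]) (subst_f x t (openv 0 (FV z) C))"
    by (intro wf_All.IH) (auto intro: has_ty_append)
  with z wf_All.prems(3) show ?case
    using fv_f_subst_f[of x t C]
    by (auto intro!: wf_All_fresh simp: subst_f_openv_commute)
next
  case (wf_Ex G' U C)
  obtain z where z: "z \<notin> cvars G \<union> cvars G' \<union> {x} \<union> fv_f C \<union> fv_t t"
    using ex_fresh_nat[of "cvars G \<union> cvars G' \<union> {x} \<union> fv_f C \<union> fv_t t"] by auto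
  with wf_Ex.prems have "wf_fm S (G @ [CVar z U]) (subst_f x t (openv 0 (FV z) C))"
    by (intro wf_Ex.IH) (auto intro: has_ty_append)
  with z wf_Ex.prems(3) show ?case
    using fv_f_subst_f[of x t C]
    by (auto intro!: wf_Ex_fresh simp: subst_f_openv_commute)
next
  case (wf_New G' w C)
  have "wf_fm S (G @ [CName c w]) (subst_f x t (openn 0 c C))" if "c \<notin> cnames G" for c
    using that wf_New.prems by (intro wf_New.IH) (auto simp: cnames_iff intro: has_ty_append)
  with wf_New.prems(3) show ?case
    by (auto intro!: wf_fm.wf_New simp: subst_f_openn_commute)
next
  case (wf_Rel G' ts p)
  then show ?case
    by (auto intro!: wf_fm.wf_Rel simp: list.rel_map elim!: list.rel_mono_strong)
      (metis has_ty_subst)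
qed (auto intro!: wf_fm.intros intro: has_ty_subst)

lemma wf_openv_inst:
  assumes "wf_fm S (G @ [CVar x T]) (openv 0 (FV x) A)" "x \<notin> cvars G" "x \<notin> fv_f A"
    and "has_ty S G t T"
  shows "wf_fm S G (openv 0 t A)"
  using wf_subst[OF assms(1) _ assms(2,4)] subst_f_openv_fresh[OF assms(3)] by simp

lemma wf_All_inst: "wf_fm S G (All T A) \<Longrightarrow> has_ty S G t T \<Longrightarrow> wf_fm S G (openv 0 t A)"
  and wf_Ex_inst: "wf_fm S G (Ex T A) \<Longrightarrow> has_ty S G t T \<Longrightarrow> wf_fm S G (openv 0 t A)"
proof -
  obtain x where x: "x \<notin> cvars G \<union> fv_f A"
    using ex_fresh_nat[of "cvars G \<union> fv_f A"] by auto
  show "wf_fm S G (All T A) \<Longrightarrow> has_ty S G t T \<Longrightarrow> wf_fm S G (openv 0 t A)"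
    using x by (auto elim!: wf_fm.cases intro: wf_openv_inst)
  show "wf_fm S G (Ex T A) \<Longrightarrow> has_ty S G t T \<Longrightarrow> wf_fm S G (openv 0 t A)"
    using x by (auto elim!: wf_fm.cases intro: wf_openv_inst)
qed

section \<open>Admissible initial sequents\<close>

lemma der_Init_mem: "P \<in># Gam \<Longrightarrow> P \<in># Del \<Longrightarrow> is_atom P \<Longrightarrow> der S G Gam Del n"
  by (metis der.Init multi_member_split add_mset_add_single)

lemma subst_t_fresh: "x \<notin> fv_t t \<Longrightarrow> subst_t x s t = t"
  by (induction t) (auto intro: map_idI)

lemma der_double_swap_step:
  assumes "is_atom P" "has_ty S G t T" "has_ty S G a (NTy v)" "has_ty S G b (NTy v)"
    and "der S G (Gam + {#Eq (Swp a b (Swp a b t)) t, subst_at x (Swp a b (Swp a b t)) P,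
      subst_at x t P#}) Del n"
  shows "der S G (Gam + {#subst_at x (Swp a b (Swp a b t)) P#}) Del n"
proof -
  have rewritten:
    "der S G (Gam + {#Eq (Swp a b (Swp a b t)) t, subst_at x (Swp a b (Swp a b t)) P#}) Del n"
    by (rule der.EqS[OF assms(1)]) (use assms(5) in \<open>simp add: add_mset_commute\<close>)
  show ?thesis
    by (rule der.S2[OF assms(3,4,2)]) (use rewritten in \<open>simp add: add_mset_commute\<close>)
qed

text \<open>The atom \<open>mk args\<close> is rewritten one argument at a time; for the argument \<open>t\<close> the
  replacement context is the atom with a fresh variable \<open>z\<close> in place of \<open>t\<close>.\<close>

lemma der_double_swap_args:
  assumes mk_subst:
    "\<And>z s ts. length ts = length args \<Longrightarrow> subst_at z s (mk ts) = mk (map (subst_t z s) ts)"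
    and mk_atom: "\<And>ts. length ts = length args \<Longrightarrow> is_atom (mk ts)"
    and args: "\<forall>t\<in>set args. \<exists>T. has_ty S G t T"
    and a: "has_ty S G a (NTy v)" and b: "has_ty S G b (NTy v)"
  shows "der S G (Gam + {#mk (map (\<lambda>t. Swp a b (Swp a b t)) args)#}) (Del + {#mk args#}) n"
proof -
  let ?ss = "\<lambda>t. Swp a b (Swp a b t)"
  have "der S G (Gam + {#mk (zs @ map ?ss ys)#}) (Del + {#mk (zs @ ys)#}) n"
    if "length (zs @ ys) = length args" "\<forall>t\<in>set ys. \<exists>T. has_ty S G t T" for zs ys Gam
    using that
  proof (induction ys arbitrary: zs Gam)
    case Nil
    then show ?case
      by (auto intro: der_Init_mem mk_atom)
  next
    case (Cons y ys)
    obtain T where T: "has_ty S G y T"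
      using Cons.prems(2) by auto
    let ?X = "(\<Union>t\<in>set (zs @ y # ys). fv_t t) \<union> fv_t a \<union> fv_t b"
    obtain z where z: "z \<notin> ?X"
      using ex_fresh_nat[of ?X] by auto
    let ?P = "mk (zs @ FV z # map ?ss ys)"
    have fresh: "map (subst_t z s) zs = zs" "map (subst_t z s \<circ> ?ss) ys = map ?ss ys" for s
      using z by (auto intro!: map_idI simp: subst_t_fresh)
    from Cons.prems(1) have P: "subst_at z (?ss y) ?P = mk (zs @ map ?ss (y # ys))"
      "subst_at z y ?P = mk ((zs @ [y]) @ map ?ss ys)"
      by (simp_all add: mk_subst fresh)
    have "der S G (Gam + {#Eq (?ss y) y, subst_at z (?ss y) ?P#} + {#mk ((zs @ [y]) @ map ?ss ys)#})
      (Del + {#mk ((zs @ [y]) @ ys)#}) n"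
      using Cons.prems by (intro Cons.IH) auto
    then have "der S G (Gam + {#Eq (?ss y) y, subst_at z (?ss y) ?P, subst_at z y ?P#})
      (Del + {#mk (zs @ y # ys)#}) n"
      unfolding P by (simp add: add_mset_commute)
    from der_double_swap_step[OF _ T a b this] Cons.prems(1) show ?case
      unfolding P by (simp add: mk_atom)
  qed
  from this[of "[]" args] args show ?thesis
    by simp
qed

lemma der_double_swap_init:
  assumes "is_atom P" "wf_fm S G P" "has_ty S G a (NTy v)" "has_ty S G b (NTy v)"
  shows "der S G (Gam + {#fswap a b (fswap a b P)#}) (Del + {#P#}) n"
proof -
  have two: "length ts = 2 \<longleftrightarrow> (\<exists>t u. ts = [t, u])" for ts :: "trm list"
    by (auto simp: numeral_2_eq_2 length_Suc_conv)
  from assms(1,2) consider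
      (Eq) t u T where "P = Eq t u" "has_ty S G t T" "has_ty S G u T"
    | (Fr) t u v' T where "P = Fr t u" "has_ty S G t (NTy v')" "has_ty S G u T"
    | (Rel) p ts where "P = Rel p ts" "list_all2 (has_ty S G) ts (pty S p)"
    by (cases P) (auto elim: wf_fm.cases)
  then show ?thesis
  proof cases
    case Eq
    with der_double_swap_args[of "[t, u]" "\<lambda>ts. Eq (ts ! 0) (ts ! 1)", OF _ _ _ assms(3,4)]
    show ?thesis
      by (auto simp: two)
  next
    case Fr
    with der_double_swap_args[of "[t, u]" "\<lambda>ts. Fr (ts ! 0) (ts ! 1)", OF _ _ _ assms(3,4)]
    show ?thesis
      by (auto simp: two)
  next
    case Rel
    then have "\<forall>t\<in>set ts. \<exists>T. has_ty S G t T"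
      by (blast dest: list_all2_ex_related)
    with Rel der_double_swap_args[of ts "Rel p", OF _ _ _ assms(3,4)] show ?thesis
      by (simp add: comp_def)
  qed
qed

lemma der_swap_init:
  assumes "is_atom P" "wf_fm S G P" "has_ty S G a (NTy v)" "has_ty S G b (NTy v)"
  shows "der S G (Gam + {#fswap a b P#}) (Del + {#P#}) n"
proof (rule der.E3)
  show "der S G (Gam + {#fswap a b P, fswap a b (fswap a b P)#}) (Del + {#P#}) n"
    using der_double_swap_init[OF assms, of "Gam + {#fswap a b P#}"] by (simp add: add_mset_commute)
qed (use assms wf_fswap in auto)

section \<open>Undoing a swap inside a derivation\<close>

text \<open>The well-formedness of \<open>A'\<close> is what rule (E3) needs to restore the swapped atom \<open>A\<close>.\<close>

definition unswaps :: "sig \<Rightarrow> trm \<Rightarrow> trm \<Rightarrow> ctx \<Rightarrow> fm \<Rightarrow> fm \<Rightarrow> bool" where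
  "unswaps S a b G A A' \<longleftrightarrow> A' = A \<or> A = fswap a b A' \<and> wf_fm S G A'"

definition scoped :: "ctx \<Rightarrow> fm multiset \<Rightarrow> bool" where
  "scoped G W \<longleftrightarrow> fv_ms W \<subseteq> cvars G \<and> fn_ms W \<subseteq> cnames G"

text \<open>If \<open>A' \<noteq> A\<close>, rule (E3) recovers the atom \<open>A\<close> from \<open>A'\<close>, but \<open>A'\<close> stays in the antecedent.\<close>

definition residue :: "fm \<Rightarrow> fm \<Rightarrow> fm multiset" where
  "residue A A' = (if A' = A then {#} else {#A'#})"

lemma unswaps_refl [simp]: "unswaps S a b G A A"
  by (simp add: unswaps_def)

lemma rel_mset_unswaps_refl: "rel_mset (unswaps S a b G) M M"
  by (rule multiset.rel_refl) simp

lemma rel_mset_unswaps_mono: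
  "rel_mset (unswaps S a b G) M N \<Longrightarrow> set G \<subseteq> set G' \<Longrightarrow> rel_mset (unswaps S a b G') M N"
  by (erule multiset.rel_mono_strong) (auto simp: unswaps_def intro: wf_mono)

lemma unswaps_fv: "unswaps S a b G A A' \<Longrightarrow> fv_f A' \<subseteq> fv_f A \<and> fn_f A' \<subseteq> fn_f A"
  using fv_f_fswap[of A' a b] fn_f_fswap[of A' a b] by (auto simp: unswaps_def)

lemma rel_mset_unswaps_fv:
  "rel_mset (unswaps S a b G) M N \<Longrightarrow> fv_ms N \<subseteq> fv_ms M \<and> fn_ms N \<subseteq> fn_ms M"
proof (induction M arbitrary: N)
  case (add A M)
  then show ?case
    by (fastforce dest!: msed_rel_invL unswaps_fv)
qed simp

lemma scoped_mono: "scoped G W \<Longrightarrow> set G \<subseteq> set G' \<Longrightarrow> scoped G' W"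
  using cvars_mono cnames_mono unfolding scoped_def by blast

lemma scoped_residue: "scoped G W \<Longrightarrow> unswaps S a b G A A' \<Longrightarrow> scoped G (W + residue A A')"
  by (auto simp: scoped_def residue_def unswaps_def dest: wf_fm_scoped)

lemma rel_mset_add_mset2_invL:
  assumes "rel_mset R (add_mset x (add_mset y M)) N"
  shows "\<exists>N' x' y'. N = add_mset x' (add_mset y' N') \<and> R x x' \<and> R y y' \<and> rel_mset R M N'"
proof -
  obtain N1 x' where "N = add_mset x' N1" "R x x'" "rel_mset R (add_mset y M) N1"
    using msed_rel_invL[OF assms] by blast
  with msed_rel_invL[of R y M N1] show ?thesis
    by blast
qed

lemma unswaps_Top: "unswaps S a b G Top X \<Longrightarrow> X = Top"
  and unswaps_Bot: "unswaps S a b G Bot X \<Longrightarrow> X = Bot"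
  by (cases X; simp add: unswaps_def)+

lemma unswaps_And: "unswaps S a b G (And A B) X
    \<Longrightarrow> \<exists>A' B'. X = And A' B' \<and> unswaps S a b G A A' \<and> unswaps S a b G B B'"
  and unswaps_Or: "unswaps S a b G (Or A B) X
    \<Longrightarrow> \<exists>A' B'. X = Or A' B' \<and> unswaps S a b G A A' \<and> unswaps S a b G B B'"
  and unswaps_Imp: "unswaps S a b G (Imp A B) X
    \<Longrightarrow> \<exists>A' B'. X = Imp A' B' \<and> unswaps S a b G A A' \<and> unswaps S a b G B B'"
  by (cases X; auto simp: unswaps_def elim: wf_fm.cases)+

lemma unswaps_openv:
  "wf_fm S G (openv 0 t A') \<Longrightarrow> has_ty S G a U \<Longrightarrow> has_ty S G b U'
    \<Longrightarrow> unswaps S a b G (openv 0 t (fswap a b A')) (openv 0 t A')"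
  by (simp add: unswaps_def fswap_openv)

lemma unswaps_All:
  assumes "unswaps S a b G (All T A) X" "has_ty S G a U" "has_ty S G b U'"
  shows "\<exists>A'. X = All T A' \<and> (\<forall>G' t. set G \<subseteq> set G' \<longrightarrow> has_ty S G' t T
    \<longrightarrow> unswaps S a b G' (openv 0 t A) (openv 0 t A'))"
proof (cases "X = All T A")
  case False
  with assms(1) obtain A' where "X = All T A'" "A = fswap a b A'" "wf_fm S G (All T A')"
    by (cases X) (auto simp: unswaps_def)
  with assms(2,3) show ?thesis
    by (blast intro: unswaps_openv wf_All_inst wf_mono has_ty_mono)
qed auto

lemma unswaps_Ex:
  assumes "unswaps S a b G (Ex T A) X" "has_ty S G a U" "has_ty S G b U'"
  shows "\<exists>A'. X = Ex T A' \<and> (\<forall>G' t. set G \<subseteq> set G' \<longrightarrow> has_ty S G' t T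
    \<longrightarrow> unswaps S a b G' (openv 0 t A) (openv 0 t A'))"
proof (cases "X = Ex T A")
  case False
  with assms(1) obtain A' where "X = Ex T A'" "A = fswap a b A'" "wf_fm S G (Ex T A')"
    by (cases X) (auto simp: unswaps_def)
  with assms(2,3) show ?thesis
    by (blast intro: unswaps_openv wf_Ex_inst wf_mono has_ty_mono)
qed auto

lemma unswaps_New:
  assumes "unswaps S a b G (New w A) X" "has_ty S G a U" "has_ty S G b U'"
  shows "\<exists>A'. X = New w A' \<and> (\<forall>c. c \<notin> cnames G
    \<longrightarrow> unswaps S a b (G @ [CName c w]) (openn 0 c A) (openn 0 c A'))"
proof (cases "X = New w A")
  case False
  with assms(1) obtain A' where "X = New w A'" "A = fswap a b A'" "wf_fm S G (New w A')"
    by (cases X) (auto simp: unswaps_def)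
  with assms(2,3) show ?thesis
    by (auto simp: unswaps_def fswap_openn elim: wf_fm.cases)
qed auto

lemma der_residue_atom:
  assumes "is_atom A" "unswaps S a b G A A'" "has_ty S G a (NTy v)" "has_ty S G b (NTy v)"
    and "der S G (Gam + residue A A' + {#A#}) Del n"
  shows "der S G (Gam + {#A'#}) Del n"
proof (cases "A' = A")
  case False
  with assms(2) have "A = fswap a b A'" "wf_fm S G A'"
    by (auto simp: unswaps_def)
  with assms(1,3-5) False show ?thesis
    using der.E3[of A' S G a v b Gam Del n] by (simp add: residue_def add_mset_commute)
qed (use assms(5) in \<open>simp add: residue_def\<close>)

lemma der_residue_atom2:
  assumes "is_atom A" "is_atom B" "unswaps S a b G A A'" "unswaps S a b G B B'"
    and "has_ty S G a (NTy v)" "has_ty S G b (NTy v)"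
    and "der S G (Gam + residue A A' + residue B B' + {#A, B#}) Del n"
  shows "der S G (Gam + {#A', B'#}) Del n"
proof -
  have "der S G (Gam + {#B'#} + residue A A' + {#A#}) Del n"
    using der_residue_atom[OF assms(2,4-6), of "Gam + residue A A' + {#A#}"] assms(7)
    by (simp add: ac_simps add_mset_commute)
  from der_residue_atom[OF assms(1,3,5,6) this] show ?thesis
    by (simp add: add_mset_commute)
qed

lemma is_atom_subst_at: "is_atom P \<Longrightarrow> is_atom (subst_at x t P)"
  by (cases P) auto

text \<open>The multiset \<open>W\<close> accumulates the residues. Weakening by it is harmless because its free
  symbols are declared in the context, so no eigenvariable condition is violated.\<close>

lemma der_unswap:
  assumes "der S G Gam Del n"
    and "has_ty S G sa (NTy sv)" "has_ty S G sb (NTy sv)"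
    and "rel_mset (unswaps S sa sb G) Gam Gam'" "rel_mset (unswaps S sa sb G) Del Del'"
    and "scoped G W"
  shows "der S G (W + Gam') Del' n"
  using assms
proof (induction arbitrary: Gam' Del' W rule: der.induct)
  case (Init P G Gam Del n)
  obtain Gam1 P1 where g: "Gam' = add_mset P1 Gam1" "unswaps S sa sb G P P1"
    using msed_rel_invL[OF Init.prems(3)[simplified]] by blast
  obtain Del1 P2 where d: "Del' = add_mset P2 Del1" "unswaps S sa sb G P P2"
    using msed_rel_invL[OF Init.prems(4)[simplified]] by blast
  have "der S G (W + Gam1 + residue P P1 + {#P#}) (Del1 + {#P2#}) n"
  proof (cases "P2 = P")
    case True
    with Init.hyps show ?thesis
      by (auto intro: der_Init_mem)
  next
    case False
    with d(2) have "P = fswap sa sb P2" "wf_fm S G P2"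
      by (auto simp: unswaps_def)
    with Init.hyps Init.prems(1,2) show ?thesis
      using der_swap_init[of P2 S G sa sv sb "W + Gam1 + residue P P1" Del1 n] by simp
  qed
  from der_residue_atom[OF Init.hyps g(2) Init.prems(1,2) this] g d show ?case
    by simp
next
  case (TopR G Gam Del n)
  obtain Del1 X where "Del' = add_mset X Del1" "unswaps S sa sb G Top X"
    using msed_rel_invL[OF TopR.prems(4)[simplified]] by blast
  then show ?case
    using der.TopR[of S G "W + Gam'" Del1 n] by (auto dest: unswaps_Top)
next
  case (BotL G Gam Del n)
  obtain Gam1 X where "Gam' = add_mset X Gam1" "unswaps S sa sb G Bot X"
    using msed_rel_invL[OF BotL.prems(3)[simplified]] by blast
  then show ?case
    using der.BotL[of S G "W + Gam1" Del' n] by (auto dest: unswaps_Bot)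
next
  case (AndL G Gam A B Del n)
  obtain Gam1 X where g: "Gam' = add_mset X Gam1" "unswaps S sa sb G (And A B) X"
      "rel_mset (unswaps S sa sb G) Gam Gam1"
    using msed_rel_invL[OF AndL.prems(3)[simplified]] by blast
  obtain A' B' where x: "X = And A' B'" "unswaps S sa sb G A A'" "unswaps S sa sb G B B'"
    using unswaps_And[OF g(2)] by blast
  have "der S G (W + (Gam1 + {#A', B'#})) Del' n"
    by (rule AndL.IH) (use AndL.prems g x in \<open>simp_all add: rel_mset_Plus\<close>)
  from der.AndL[OF this[unfolded add.assoc[symmetric]]] show ?case
    using g x by simp
next
  case (AndR G Gam Del A n B)
  obtain Del1 X where d: "Del' = add_mset X Del1" "unswaps S sa sb G (And A B) X"
      "rel_mset (unswaps S sa sb G) Del Del1"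
    using msed_rel_invL[OF AndR.prems(4)[simplified]] by blast
  obtain A' B' where x: "X = And A' B'" "unswaps S sa sb G A A'" "unswaps S sa sb G B B'"
    using unswaps_And[OF d(2)] by blast
  have "der S G (W + Gam') (Del1 + {#A'#}) n" "der S G (W + Gam') (Del1 + {#B'#}) n"
    by (rule AndR.IH; use AndR.prems d x in \<open>simp_all add: rel_mset_Plus\<close>)+
  from der.AndR[OF this] show ?case
    using d x by simp
next
  case (OrL G Gam A Del n B)
  obtain Gam1 X where g: "Gam' = add_mset X Gam1" "unswaps S sa sb G (Or A B) X"
      "rel_mset (unswaps S sa sb G) Gam Gam1"
    using msed_rel_invL[OF OrL.prems(3)[simplified]] by blast
  obtain A' B' where x: "X = Or A' B'" "unswaps S sa sb G A A'" "unswaps S sa sb G B B'"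
    using unswaps_Or[OF g(2)] by blast
  have "der S G (W + (Gam1 + {#A'#})) Del' n" "der S G (W + (Gam1 + {#B'#})) Del' n"
    by (rule OrL.IH; use OrL.prems g x in \<open>simp_all add: rel_mset_Plus\<close>)+
  from der.OrL[OF this[unfolded add.assoc[symmetric]]] show ?case
    using g x by simp
next
  case (OrR G Gam Del A B n)
  obtain Del1 X where d: "Del' = add_mset X Del1" "unswaps S sa sb G (Or A B) X"
      "rel_mset (unswaps S sa sb G) Del Del1"
    using msed_rel_invL[OF OrR.prems(4)[simplified]] by blast
  obtain A' B' where x: "X = Or A' B'" "unswaps S sa sb G A A'" "unswaps S sa sb G B B'"
    using unswaps_Or[OF d(2)] by blast
  have "der S G (W + Gam') (Del1 + {#A', B'#}) n"
    by (rule OrR.IH) (use OrR.prems d x in \<open>simp_all add: rel_mset_Plus\<close>)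
  from der.OrR[OF this] show ?case
    using d x by simp
next
  case (ImpL G Gam Del A n B)
  obtain Gam1 X where g: "Gam' = add_mset X Gam1" "unswaps S sa sb G (Imp A B) X"
      "rel_mset (unswaps S sa sb G) Gam Gam1"
    using msed_rel_invL[OF ImpL.prems(3)[simplified]] by blast
  obtain A' B' where x: "X = Imp A' B'" "unswaps S sa sb G A A'" "unswaps S sa sb G B B'"
    using unswaps_Imp[OF g(2)] by blast
  have "der S G (W + Gam1) (Del' + {#A'#}) n" "der S G (W + (Gam1 + {#B'#})) Del' n"
    by (rule ImpL.IH; use ImpL.prems g x in \<open>simp_all add: rel_mset_Plus\<close>)+
  from der.ImpL[OF this[unfolded add.assoc[symmetric]]] show ?case
    using g x by simp
next
  case (ImpR G Gam A Del B n)
  obtain Del1 X where d: "Del' = add_mset X Del1" "unswaps S sa sb G (Imp A B) X"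
      "rel_mset (unswaps S sa sb G) Del Del1"
    using msed_rel_invL[OF ImpR.prems(4)[simplified]] by blast
  obtain A' B' where x: "X = Imp A' B'" "unswaps S sa sb G A A'" "unswaps S sa sb G B B'"
    using unswaps_Imp[OF d(2)] by blast
  have "der S G (W + (Gam' + {#A'#})) (Del1 + {#B'#}) n"
    by (rule ImpR.IH) (use ImpR.prems d x in \<open>simp_all add: rel_mset_Plus\<close>)
  from der.ImpR[OF this[unfolded add.assoc[symmetric]]] show ?case
    using d x by simp
next
  case EqR
  show ?case
    by (rule der.EqR[OF EqR.hyps(1)], unfold add.assoc, rule EqR.IH)
      (use EqR.prems in \<open>simp_all add: rel_mset_Plus\<close>)
next
  case S1
  show ?case
    by (rule der.S1[OF S1.hyps(1,2)], unfold add.assoc, rule S1.IH)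
      (use S1.prems in \<open>simp_all add: rel_mset_Plus\<close>)
next
  case S2
  show ?case
    by (rule der.S2[OF S2.hyps(1-3)], unfold add.assoc, rule S2.IH)
      (use S2.prems in \<open>simp_all add: rel_mset_Plus\<close>)
next
  case S3
  show ?case
    by (rule der.S3[OF S3.hyps(1,2)], unfold add.assoc, rule S3.IH)
      (use S3.prems in \<open>simp_all add: rel_mset_Plus\<close>)
next
  case (E1 G a v b Gam c)
  show ?case
    by (rule der.E1[OF E1.hyps(1,2), where c = c], unfold add.assoc, rule E1.IH)
      (use E1.prems in \<open>simp_all add: rel_mset_Plus\<close>)
next
  case E2
  show ?case
    by (rule der.E2[OF E2.hyps(1-3)], unfold add.assoc, rule E2.IH)
      (use E2.prems in \<open>simp_all add: rel_mset_Plus\<close>)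
next
  case E2_swap
  show ?case
    by (rule der.E2_swap[OF E2_swap.hyps(1-3)], unfold add.assoc, rule E2_swap.IH)
      (use E2_swap.prems in \<open>simp_all add: rel_mset_Plus\<close>)
next
  case E2_abs
  show ?case
    by (rule der.E2_abs[OF E2_abs.hyps(1-3)], unfold add.assoc, rule E2_abs.IH)
      (use E2_abs.prems in \<open>simp_all add: rel_mset_Plus\<close>)
next
  case F2
  show ?case
    by (rule der.F2[OF F2.hyps(1-3)], unfold add.assoc, rule F2.IH)
      (use F2.prems in \<open>simp_all add: rel_mset_Plus\<close>)
next
  case CtxFresh
  show ?case
    by (rule der.CtxFresh[OF CtxFresh.hyps(1)], unfold add.assoc, rule CtxFresh.IH)
      (use CtxFresh.prems in \<open>simp_all add: rel_mset_Plus\<close>)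
next
  case (AllL G t T Gam A Del n)
  obtain Gam1 X where g: "Gam' = add_mset X Gam1" "unswaps S sa sb G (All T A) X"
      "rel_mset (unswaps S sa sb G) Gam Gam1"
    using msed_rel_invL[OF AllL.prems(3)[simplified]] by blast
  obtain A' where x: "X = All T A'" "unswaps S sa sb G (openv 0 t A) (openv 0 t A')"
    using unswaps_All[OF g(2) AllL.prems(1,2)] AllL.hyps(1) by blast
  have "der S G (W + (Gam1 + {#All T A', openv 0 t A'#})) Del' n"
    by (rule AllL.IH) (use AllL.prems g x in \<open>simp_all add: rel_mset_Plus\<close>)
  from der.AllL[OF AllL.hyps(1) this[unfolded add.assoc[symmetric]]] show ?case
    using g x by simp
next
  case (ExR G t T Gam Del A n)
  obtain Del1 X where d: "Del' = add_mset X Del1" "unswaps S sa sb G (Ex T A) X"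
      "rel_mset (unswaps S sa sb G) Del Del1"
    using msed_rel_invL[OF ExR.prems(4)[simplified]] by blast
  obtain A' where x: "X = Ex T A'" "unswaps S sa sb G (openv 0 t A) (openv 0 t A')"
    using unswaps_Ex[OF d(2) ExR.prems(1,2)] ExR.hyps(1) by blast
  have "der S G (W + Gam') (Del1 + {#Ex T A', openv 0 t A'#}) n"
    by (rule ExR.IH) (use ExR.prems d x in \<open>simp_all add: rel_mset_Plus\<close>)
  from der.ExR[OF ExR.hyps(1) this] show ?case
    using d x by simp
next
  case (AllR y G Gam Del A T n)
  obtain Del1 X where d: "Del' = add_mset X Del1" "unswaps S sa sb G (All T A) X"
      "rel_mset (unswaps S sa sb G) Del Del1"
    using msed_rel_invL[OF AllR.prems(4)[simplified]] by blast
  let ?G = "G @ [CVar y T]"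
  have G: "set G \<subseteq> set ?G" "has_ty S ?G (FV y) T"
    by (auto intro: has_ty.typ_FV)
  obtain A' where x: "X = All T A'"
      "unswaps S sa sb ?G (openv 0 (FV y) A) (openv 0 (FV y) A')"
    using unswaps_All[OF d(2) AllR.prems(1,2)] G by blast
  have "der S ?G (W + Gam') (Del1 + {#openv 0 (FV y) A'#}) n"
    by (rule AllR.IH) (use AllR.prems d x G in
      \<open>auto intro!: rel_mset_Plus intro: has_ty_mono rel_mset_unswaps_mono scoped_mono\<close>)
  moreover have "y \<notin> fv_ms (W + Gam')" "y \<notin> fv_ms Del1" "y \<notin> fv_f A'"
    using rel_mset_unswaps_fv[OF AllR.prems(3)] rel_mset_unswaps_fv[OF d(3)] AllR.prems(5)
      AllR.hyps(1-4) unswaps_fv[OF d(2)] x(1) by (auto simp: scoped_def)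
  ultimately show ?case
    using der.AllR[OF AllR.hyps(1)] d x by simp
next
  case (ExL y G Gam Del A T n)
  obtain Gam1 X where g: "Gam' = add_mset X Gam1" "unswaps S sa sb G (Ex T A) X"
      "rel_mset (unswaps S sa sb G) Gam Gam1"
    using msed_rel_invL[OF ExL.prems(3)[simplified]] by blast
  let ?G = "G @ [CVar y T]"
  have G: "set G \<subseteq> set ?G" "has_ty S ?G (FV y) T"
    by (auto intro: has_ty.typ_FV)
  obtain A' where x: "X = Ex T A'"
      "unswaps S sa sb ?G (openv 0 (FV y) A) (openv 0 (FV y) A')"
    using unswaps_Ex[OF g(2) ExL.prems(1,2)] G by blast
  have "der S ?G (W + (Gam1 + {#openv 0 (FV y) A'#})) Del' n"
    by (rule ExL.IH) (use ExL.prems g x G in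
      \<open>auto intro!: rel_mset_Plus intro: has_ty_mono rel_mset_unswaps_mono scoped_mono\<close>)
  moreover have "y \<notin> fv_ms (W + Gam1)" "y \<notin> fv_ms Del'" "y \<notin> fv_f A'"
    using rel_mset_unswaps_fv[OF g(3)] rel_mset_unswaps_fv[OF ExL.prems(4)] ExL.prems(5)
      ExL.hyps(1-4) unswaps_fv[OF g(2)] x(1) by (auto simp: scoped_def)
  ultimately show ?case
    using der.ExL[OF ExL.hyps(1)] g x by (simp add: add.assoc)
next
  case (NR c G Gam Del A w n)
  obtain Del1 X where d: "Del' = add_mset X Del1" "unswaps S sa sb G (New w A) X"
      "rel_mset (unswaps S sa sb G) Del Del1"
    using msed_rel_invL[OF NR.prems(4)[simplified]] by blast
  let ?G = "G @ [CName c w]"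
  obtain A' where x: "X = New w A'" "unswaps S sa sb ?G (openn 0 c A) (openn 0 c A')"
    using unswaps_New[OF d(2) NR.prems(1,2)] NR.hyps(1) by blast
  have "der S ?G (W + Gam') (Del1 + {#openn 0 c A'#}) n"
    by (rule NR.IH) (use NR.prems d x in
      \<open>auto intro!: rel_mset_Plus intro: has_ty_append rel_mset_unswaps_mono scoped_mono\<close>)
  moreover have "c \<notin> fn_ms (W + Gam')" "c \<notin> fn_ms Del1" "c \<notin> fn_f A'"
    using rel_mset_unswaps_fv[OF NR.prems(3)] rel_mset_unswaps_fv[OF d(3)] NR.prems(5)
      NR.hyps(1-4) unswaps_fv[OF d(2)] x(1) by (auto simp: scoped_def)
  ultimately show ?case
    using der.NR[OF NR.hyps(1)] d x by simp
next
  case (NL c G Gam Del A w n)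
  obtain Gam1 X where g: "Gam' = add_mset X Gam1" "unswaps S sa sb G (New w A) X"
      "rel_mset (unswaps S sa sb G) Gam Gam1"
    using msed_rel_invL[OF NL.prems(3)[simplified]] by blast
  let ?G = "G @ [CName c w]"
  obtain A' where x: "X = New w A'" "unswaps S sa sb ?G (openn 0 c A) (openn 0 c A')"
    using unswaps_New[OF g(2) NL.prems(1,2)] NL.hyps(1) by blast
  have "der S ?G (W + (Gam1 + {#openn 0 c A'#})) Del' n"
    by (rule NL.IH) (use NL.prems g x in
      \<open>auto intro!: rel_mset_Plus intro: has_ty_append rel_mset_unswaps_mono scoped_mono\<close>)
  moreover have "c \<notin> fn_ms (W + Gam1)" "c \<notin> fn_ms Del'" "c \<notin> fn_f A'"
    using rel_mset_unswaps_fv[OF g(3)] rel_mset_unswaps_fv[OF NL.prems(4)] NL.prems(5)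
      NL.hyps(1-4) unswaps_fv[OF g(2)] x(1) by (auto simp: scoped_def)
  ultimately show ?case
    using der.NL[OF NL.hyps(1)] g x by (simp add: add.assoc)
next
  case F4
  show ?case
    by (rule der.F4[OF F4.hyps(1,2)]; unfold add.assoc; rule F4.IH)
      (use F4.prems in \<open>simp_all add: rel_mset_Plus\<close>)
next
  case (A3 G t v T a x Gam Del n)
  let ?G = "G @ [CVar a (NTy v), CVar x T]"
  have "der S ?G (W + (Gam' + {#Eq t (Abst (FV a) (FV x))#})) Del' n"
    by (rule A3.IH) (use A3.prems in
      \<open>auto intro!: rel_mset_Plus intro: has_ty_append rel_mset_unswaps_mono scoped_mono\<close>)
  moreover have "a \<notin> fv_ms (W + Gam') \<union> fv_ms Del'" "x \<notin> fv_ms (W + Gam') \<union> fv_ms Del'"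
    using rel_mset_unswaps_fv[OF A3.prems(3)] rel_mset_unswaps_fv[OF A3.prems(4)] A3.prems(5)
      A3.hyps(1-6) by (auto simp: scoped_def)
  ultimately show ?case
    using der.A3[OF A3.hyps(1-4)] by (simp add: add.assoc)
next
  case (F c G Gam Del w n)
  have "der S (G @ [CName c w]) (W + Gam') Del' n"
    by (rule F.IH) (use F.prems in
      \<open>auto intro: has_ty_append rel_mset_unswaps_mono scoped_mono\<close>)
  moreover have "c \<notin> fn_ms (W + Gam')" "c \<notin> fn_ms Del'"
    using rel_mset_unswaps_fv[OF F.prems(3)] rel_mset_unswaps_fv[OF F.prems(4)] F.prems(5)
      F.hyps(1-3) by (auto simp: scoped_def)
  ultimately show ?case
    using der.F[OF F.hyps(1)] by simp
next
  case (F3 G a v Gam Del n)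
  obtain Gam1 X where g: "Gam' = add_mset X Gam1" "unswaps S sa sb G (Fr a a) X"
    using msed_rel_invL[OF F3.prems(3)[simplified]] by blast
  have "der S G (W + Gam1 + residue (Fr a a) X + {#Fr a a#}) Del' n"
    by (rule der.F3[OF F3.hyps])
  from der_residue_atom[OF _ g(2) F3.prems(1,2) this] g show ?case
    by simp
next
  case (E3 P G a v b Gam Del n)
  obtain Gam1 X where g: "Gam' = add_mset X Gam1" "unswaps S sa sb G P X"
      "rel_mset (unswaps S sa sb G) Gam Gam1"
    using msed_rel_invL[OF E3.prems(3)[simplified]] by blast
  let ?W = "W + residue P X"
  have "der S G (?W + (Gam1 + {#P, fswap a b P#})) Del' n"
    by (rule E3.IH) (use E3.prems g scoped_residue in \<open>simp_all add: rel_mset_Plus\<close>)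
  from der.E3[OF E3.hyps(1-4) this[unfolded add.assoc[symmetric]]]
  have "der S G (W + Gam1 + residue P X + {#P#}) Del' n"
    by (simp add: ac_simps)
  from der_residue_atom[OF E3.hyps(1) g(2) E3.prems(1,2) this] g show ?case
    by simp
next
  case (EqS P G Gam t u x Del n)
  obtain Gam1 E' Q' where g: "Gam' = add_mset E' (add_mset Q' Gam1)"
      "unswaps S sa sb G (Eq t u) E'" "unswaps S sa sb G (subst_at x t P) Q'"
      "rel_mset (unswaps S sa sb G) Gam Gam1"
    using rel_mset_add_mset2_invL[OF EqS.prems(3)[simplified]] by blast
  let ?W = "W + residue (Eq t u) E' + residue (subst_at x t P) Q'"
  have "scoped G ?W"
    using scoped_residue EqS.prems(5) g by blast
  then have "der S G (?W + (Gam1 + {#Eq t u, subst_at x t P, subst_at x u P#})) Del' n"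
    by (intro EqS.IH) (use EqS.prems g in \<open>simp_all add: rel_mset_Plus\<close>)
  from der.EqS[OF EqS.hyps(1) this[unfolded add.assoc[symmetric]]] g
    der_residue_atom2[OF _ is_atom_subst_at[OF EqS.hyps(1)] g(2,3) EqS.prems(1,2), of "W + Gam1"]
  show ?case
    by (simp add: ac_simps add_mset_commute)
next
  case (F1 G a v b x T Gam Del n)
  obtain Gam1 E' Q' where g: "Gam' = add_mset E' (add_mset Q' Gam1)"
      "unswaps S sa sb G (Fr a x) E'" "unswaps S sa sb G (Fr b x) Q'"
      "rel_mset (unswaps S sa sb G) Gam Gam1"
    using rel_mset_add_mset2_invL[OF F1.prems(3)[simplified]] by blast
  let ?W = "W + residue (Fr a x) E' + residue (Fr b x) Q'"
  have "scoped G ?W"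
    using scoped_residue F1.prems(5) g by blast
  then have "der S G (?W + (Gam1 + {#Fr a x, Fr b x, Eq (Swp a b x) x#})) Del' n"
    by (intro F1.IH) (use F1.prems g in \<open>simp_all add: rel_mset_Plus\<close>)
  from der.F1[OF F1.hyps(1-3) this[unfolded add.assoc[symmetric]]] g
    der_residue_atom2[OF _ _ g(2,3) F1.prems(1,2), of "W + Gam1"]
  show ?case
    by (simp add: ac_simps add_mset_commute)
next
  case (A1 G a v b x T y Gam Del n)
  obtain Gam1 E' Q' where g: "Gam' = add_mset E' (add_mset Q' Gam1)"
      "unswaps S sa sb G (Fr a y) E'" "unswaps S sa sb G (Eq x (Swp a b y)) Q'"
      "rel_mset (unswaps S sa sb G) Gam Gam1"
    using rel_mset_add_mset2_invL[OF A1.prems(3)[simplified]] by blast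
  let ?W = "W + residue (Fr a y) E' + residue (Eq x (Swp a b y)) Q'"
  have "scoped G ?W"
    using scoped_residue A1.prems(5) g by blast
  then have "der S G (?W + (Gam1 + {#Fr a y, Eq x (Swp a b y), Eq (Abst a x) (Abst b y)#})) Del' n"
    by (intro A1.IH) (use A1.prems g in \<open>simp_all add: rel_mset_Plus\<close>)
  from der.A1[OF A1.hyps(1-4) this[unfolded add.assoc[symmetric]]] g
    der_residue_atom2[OF _ _ g(2,3) A1.prems(1,2), of "W + Gam1"]
  show ?case
    by (simp add: ac_simps add_mset_commute)
next
  case (A2 G Gam a t b u Del n)
  let ?E = "Eq (Abst a t) (Abst b u)"
  obtain Gam1 X where g: "Gam' = add_mset X Gam1" "unswaps S sa sb G ?E X"
      "rel_mset (unswaps S sa sb G) Gam Gam1"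
    using msed_rel_invL[OF A2.prems(3)[simplified]] by blast
  let ?W = "W + residue ?E X"
  have "scoped G ?W"
    using scoped_residue A2.prems(5) g by blast
  then have "der S G (?W + (Gam1 + {#?E, Eq a b, Eq t u#})) Del' n"
    "der S G (?W + (Gam1 + {#?E, Fr a u, Eq t (Swp a b u)#})) Del' n"
    by (intro A2.IH; use A2.prems g in \<open>simp_all add: rel_mset_Plus\<close>)+
  from der.A2[OF this[unfolded add.assoc[symmetric]]]
  have "der S G (W + Gam1 + residue ?E X + {#?E#}) Del' n"
    by (simp add: ac_simps)
  from der_residue_atom[OF _ g(2) A2.prems(1,2) this] g show ?case
    by simp
qed

theorem mainTheorem17:
  fixes S :: sig and G :: ctx and \<phi> :: fm and a b :: trm and v :: nat
    and \<Gamma> \<Delta> :: "fm multiset" and n :: nat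
  assumes "ctx_ok G"
    and "wf_fm S G \<phi>"
    and "has_ty S G a (NTy v)" and "has_ty S G b (NTy v)"
  shows "(der S G (\<Gamma> + {#fswap a b \<phi>#}) \<Delta> n \<longrightarrow> der S G (\<Gamma> + {#\<phi>#}) \<Delta> n)
       \<and> (der S G \<Gamma> (\<Delta> + {#fswap a b \<phi>#}) n \<longrightarrow> der S G \<Gamma> (\<Delta> + {#\<phi>#}) n)"
proof -
  have swap: "rel_mset (unswaps S a b G) (M + {#fswap a b \<phi>#}) (M + {#\<phi>#})" for M
    using assms(2) by (simp add: rel_mset_Plus rel_mset_unswaps_refl unswaps_def)
  have empty: "scoped G {#}"
    by (simp add: scoped_def)
  show ?thesis
    using der_unswap[OF _ assms(3,4) swap rel_mset_unswaps_refl empty]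
      der_unswap[OF _ assms(3,4) rel_mset_unswaps_refl swap empty]
    by simp
qed

end
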